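(* Let $z,w>0$ be such that $\mathrm{DAG}(z,w)<\infty$, let $G=(V,E)$ be a random labelled DAG drawn from the Boltzmann model with parameters $(z,w)$, and condition on its root-layering being a given ordered partition $(V_1,\dots,V_k)$. Then, conditionally, the edge set $E$ has the following distribution: there are no edges from $V_j$ to $V_i$ for $i\le j$; for every pair $(x,y)$ with $x\in V_i$, $y\in V_j$ and $j\ge i+2$, the edge $(x,y)$ is present with probability $\frac{w}{1+w}$; for every $i\in\{1,\dots,k-1\}$ and every $y\in V_{i+1}$, the set of in-neighbours of $y$ in $V_i$ is distributed as a random subset of $V_i$ obtained by including each element independently with probability $\frac{w}{1+w}$, conditioned on being non-empty (equivalently, such subsets are redrawn until at least one edge is present); and all these random choices are mutually independent.
   Context: A labelled DAG with $n$ vertices is a directed acyclic graph on vertex set $\{1,\dots,n\}$; $v(G)$, $e(G)$ denote its numbers of vertices and edges; a source is a vertex of in-degree $0$. $\mathrm{DAG}(z,w)=\sum_G \frac{z^{v(G)}w^{e(G)}}{(1+w)^{\binom{v(G)}{2}}v(G)!}$ over all labelled DAGs. The Boltzmann model with parameters $(z,w)$ assigns probability $\frac{z^{v(G)}w^{e(G)}}{(1+w)^{\binom{v(G)}{2}}v(G)!\,\mathrm{DAG}(z,w)}$ to each labelled DAG $G$. The root-layering of a DAG $G=(V,E)$ is the ordered partition $(V_1,\dots,V_k)$ of $V$ where $V_i$ is the set of sources of the graph obtained from $G$ by deleting $V_1\cup\dots\cup V_{i-1}$. *)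

theory Defs
  imports "HOL-Analysis.Analysis"
begin

definition labelled_dags :: "(nat \<times> (nat \<times> nat) set) set" where
  "labelled_dags = {(n, E). E \<subseteq> {1..n} \<times> {1..n} \<and> acyclic E}"

definition dag_weight :: "real \<Rightarrow> real \<Rightarrow> nat \<times> (nat \<times> nat) set \<Rightarrow> real" where
  "dag_weight z w G = z ^ fst G * w ^ card (snd G) / ((1 + w) ^ (fst G choose 2) * fact (fst G))"

definition DAG_finite :: "real \<Rightarrow> real \<Rightarrow> bool" where
  "DAG_finite z w \<longleftrightarrow> dag_weight z w summable_on labelled_dags"

definition DAG_gf :: "real \<Rightarrow> real \<Rightarrow> real" where
  "DAG_gf z w = infsum (dag_weight z w) labelled_dags"

definition boltzmann_prob :: "real \<Rightarrow> real \<Rightarrow> nat \<times> (nat \<times> nat) set \<Rightarrow> real" where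
  "boltzmann_prob z w G = (if G \<in> labelled_dags then dag_weight z w G / DAG_gf z w else 0)"

definition boltzmann_event :: "real \<Rightarrow> real \<Rightarrow> (nat \<times> (nat \<times> nat) set \<Rightarrow> bool) \<Rightarrow> real" where
  "boltzmann_event z w P = infsum (boltzmann_prob z w) {G \<in> labelled_dags. P G}"

definition sources_in :: "(nat \<times> nat) set \<Rightarrow> nat set \<Rightarrow> nat set" where
  "sources_in E U = {v \<in> U. \<forall>u \<in> U. (u, v) \<notin> E}"

text \<open>Root-layering, computed with fuel m (fuel n suffices for a DAG on n vertices,
  since each step removes at least one vertex).\<close>

fun layering_fuel :: "(nat \<times> nat) set \<Rightarrow> nat set \<Rightarrow> nat \<Rightarrow> nat set list" where
  "layering_fuel E U 0 = []"
| "layering_fuel E U (Suc m) =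
     (if U = {} then [] else sources_in E U # layering_fuel E (U - sources_in E U) m)"

definition root_layering :: "nat \<times> (nat \<times> nat) set \<Rightarrow> nat set list" where
  "root_layering G = layering_fuel (snd G) {1..fst G} (fst G)"

definition ordered_partition :: "nat \<Rightarrow> nat set list \<Rightarrow> bool" where
  "ordered_partition n L \<longleftrightarrow>
     (\<forall>i < length L. L ! i \<noteq> {}) \<and>
     (\<forall>i < length L. \<forall>j < length L. i \<noteq> j \<longrightarrow> L ! i \<inter> L ! j = {}) \<and>
     \<Union> (set L) = {1..n}"

text \<open>Probability of edge set E under the described law (given layering L, p = w/(1+w)):
  no edge from V_j to V_i for i \<le> j; independent Bernoulli(p) edges from V_i to V_j, j \<ge> i+2;
  for y in V_(i+1) the in-neighbourhood in V_i is an independent Bernoulli(p) subset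
  conditioned to be nonempty. (Indices 0-based.)\<close>

definition pair_factor :: "real \<Rightarrow> (nat \<times> nat) set \<Rightarrow> nat \<Rightarrow> nat \<Rightarrow> nat \<Rightarrow> nat \<Rightarrow> real" where
  "pair_factor p E i j x y =
     (if j \<le> i then (if (x, y) \<in> E then 0 else 1)
      else if i + 2 \<le> j then (if (x, y) \<in> E then p else 1 - p)
      else 1)"

definition inneighbour_factor :: "real \<Rightarrow> (nat \<times> nat) set \<Rightarrow> nat set \<Rightarrow> nat \<Rightarrow> real" where
  "inneighbour_factor p E A y =
     (let S = {x \<in> A. (x, y) \<in> E} in
      if S = {} then 0
      else p ^ card S * (1 - p) ^ (card A - card S) / (1 - (1 - p) ^ card A))"

definition layered_edge_law :: "real \<Rightarrow> nat set list \<Rightarrow> (nat \<times> nat) set \<Rightarrow> real" where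
  "layered_edge_law p L E =
     (\<Prod>i < length L. \<Prod>j < length L. \<Prod>x \<in> L ! i. \<Prod>y \<in> L ! j. pair_factor p E i j x y) *
     (\<Prod>i < length L - 1. \<Prod>y \<in> L ! (i + 1). inneighbour_factor p E (L ! i) y)"

end

theory Submission
  imports Defs
begin

(*
  Conditioning on the root-layering L = (V_1, ..., V_k) of {1..n} pins down the vertex set, and
  an edge set E on {1..n} has root-layering L exactly when no edge enters a layer from the same
  or a later layer and every vertex of V_(i+1) has an in-neighbour in V_i; such an E is
  automatically acyclic.  As the Boltzmann weight of (n, E) is proportional to w^|E|, the
  conditional law is w^|E| / W with W the sum of w^|E'| over these edge sets.

  Both this condition and the product law split over the blocks V_i x {y} of potential
  in-edges of a vertex y.  Summing w^|T| over the admissible subsets T of a block with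
  |V_i| = m gives 1 (backward or inside a layer), (1+w)^m - 1 (y in the next layer, T
  nonempty) or (1+w)^m (any later layer), and these are exactly the normalising constants of
  the factors of the product law, so the product law is also w^|E| / W.
*)

lemma sum_Pow_UN_disjoint:
  fixes h :: "'i \<Rightarrow> 'a set \<Rightarrow> 'c :: comm_semiring_1"
  assumes "finite I" "\<And>g. g \<in> I \<Longrightarrow> finite (A g)" "disjoint_family_on A I"
  shows "(\<Sum>E\<in>Pow (\<Union>g\<in>I. A g). \<Prod>g\<in>I. h g (E \<inter> A g)) = (\<Prod>g\<in>I. \<Sum>T\<in>Pow (A g). h g T)"
proof -
  have Int_UN: "(\<Union>g'\<in>I. F g') \<inter> A g = F g" if F: "F \<in> (\<Pi>\<^sub>E g\<in>I. Pow (A g))" and "g \<in> I" for F g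
  proof -
    have "F g' \<inter> A g = {}" if "g' \<in> I" "g' \<noteq> g" for g'
    proof -
      have "F g' \<subseteq> A g'" using F that(1) by (auto simp: PiE_iff)
      moreover have "A g' \<inter> A g = {}"
        using assms(3) \<open>g \<in> I\<close> that unfolding disjoint_family_on_def by blast
      ultimately show ?thesis by blast
    qed
    moreover have "F g \<subseteq> A g" using F \<open>g \<in> I\<close> by (auto simp: PiE_iff)
    ultimately show ?thesis using \<open>g \<in> I\<close> by blast
  qed
  have "(\<Prod>g\<in>I. \<Sum>T\<in>Pow (A g). h g T) = (\<Sum>F\<in>(\<Pi>\<^sub>E g\<in>I. Pow (A g)). \<Prod>g\<in>I. h g (F g))"
    using assms by (intro prod_sum_PiE) auto
  also have "\<dots> = (\<Sum>E\<in>Pow (\<Union>g\<in>I. A g). \<Prod>g\<in>I. h g (E \<inter> A g))"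
    by (rule sum.reindex_bij_witness[of _ "\<lambda>E. restrict (\<lambda>g. E \<inter> A g) I" "\<lambda>F. \<Union>g\<in>I. F g"])
      (auto simp: Int_UN PiE_iff extensional_def fun_eq_iff)
  finally show ?thesis ..
qed

lemma prod_if_power_card_Int:
  fixes w :: "'c :: comm_semiring_1"
  assumes "finite I" "\<And>g. g \<in> I \<Longrightarrow> finite (A g)" "disjoint_family_on A I"
    and "E \<subseteq> (\<Union>g\<in>I. A g)"
  shows "(\<Prod>g\<in>I. if P g then w ^ card (E \<inter> A g) else 0) = (if \<forall>g\<in>I. P g then w ^ card E else 0)"
proof (cases "\<forall>g\<in>I. P g")
  case True
  have "(\<Prod>g\<in>I. w ^ card (E \<inter> A g)) = w ^ (\<Sum>g\<in>I. card (E \<inter> A g))"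
    by (simp add: power_sum)
  also have "(\<Sum>g\<in>I. card (E \<inter> A g)) = card (\<Union>g\<in>I. E \<inter> A g)"
    using assms(1-3) by (intro card_UN_disjoint[symmetric]) (auto simp: disjoint_family_on_def)
  also have "(\<Union>g\<in>I. E \<inter> A g) = E"
    using assms(4) by blast
  finally show ?thesis
    using True by simp
next
  case False
  then obtain g where "g \<in> I" "\<not> P g" by blast
  then show ?thesis using False assms(1) by (subst prod_zero) auto
qed

lemma prod_if_mem_eq_power:
  assumes "finite A" "S \<subseteq> A"
  shows "(\<Prod>x\<in>A. if x \<in> S then a else b) = a ^ card S * b ^ (card A - card S)"
proof -
  have "A \<inter> {x. x \<in> S} = S" "A \<inter> - {x. x \<in> S} = A - S"
    using assms(2) by auto
  then show ?thesis
    using assms by (simp add: prod.If_cases card_Diff_subset finite_subset)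
qed

lemma sum_Pow_power_card:
  fixes w :: "'c :: comm_semiring_1"
  assumes "finite B"
  shows "(\<Sum>T\<in>Pow B. w ^ card T) = (1 + w) ^ card B"
  using prod_add[OF assms, of "\<lambda>_. w" "\<lambda>_. 1"] by (simp add: add.commute)

lemma bernoulli_power_eq:
  fixes w :: "'a :: field"
  assumes "1 + w \<noteq> 0" "s \<le> m"
  shows "(w / (1 + w)) ^ s * (1 - w / (1 + w)) ^ (m - s) = w ^ s / (1 + w) ^ m"
proof -
  have "1 - w / (1 + w) = 1 / (1 + w)"
    using assms(1) by (simp add: field_simps)
  moreover have "(1 + w) ^ s * (1 + w) ^ (m - s) = (1 + w) ^ m"
    using assms(2) by (simp flip: power_add)
  ultimately show ?thesis
    by (simp add: power_divide)
qed

definition root_layered :: "(nat \<times> nat) set \<Rightarrow> nat set list \<Rightarrow> bool" where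
  "root_layered E L \<longleftrightarrow>
     (\<forall>i<length L. \<forall>j<length L. i \<le> j \<longrightarrow> (\<forall>y\<in>L ! i. \<forall>x\<in>L ! j. (x, y) \<notin> E)) \<and>
     (\<forall>i. Suc i < length L \<longrightarrow> (\<forall>y\<in>L ! Suc i. \<exists>x\<in>L ! i. (x, y) \<in> E))"

lemma root_layered_Cons:
  "root_layered E (A # Ls) \<longleftrightarrow>
     (\<forall>y\<in>A. \<forall>x\<in>A \<union> \<Union>(set Ls). (x, y) \<notin> E) \<and>
     (Ls \<noteq> [] \<longrightarrow> (\<forall>y\<in>hd Ls. \<exists>x\<in>A. (x, y) \<in> E)) \<and>
     root_layered E Ls"
  unfolding root_layered_def
  by (auto simp: All_less_Suc2 nth_Cons' hd_conv_nth in_set_conv_nth) (use nth_mem in blast)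

lemma sources_in_subset: "sources_in E U \<subseteq> U"
  by (auto simp: sources_in_def)

lemma layering_fuel_subset: "\<Union>(set (layering_fuel E U m)) \<subseteq> U"
proof (induction m arbitrary: U)
  case (Suc m)
  show ?case using Suc.IH[of "U - sources_in E U"] sources_in_subset[of E U] by auto
qed simp

lemma root_layered_layering_fuel:
  assumes "\<Union>(set (layering_fuel E U m)) = U"
  shows "root_layered E (layering_fuel E U m)"
  using assms
proof (induction m arbitrary: U)
  case 0
  then show ?case by (simp add: root_layered_def)
next
  case (Suc m)
  show ?case
  proof (cases "U = {}")
    case False
    define S where "S = sources_in E U"
    define R where "R = layering_fuel E (U - S) m"
    have unfold: "layering_fuel E U (Suc m) = S # R"
      using False by (simp add: S_def R_def)
    have R_Union: "\<Union>(set R) = U - S"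
      using Suc.prems layering_fuel_subset[of E "U - S" m] sources_in_subset[of E U]
      unfolding unfold R_def S_def by auto
    then have R: "root_layered E R"
      using Suc.IH[of "U - S"] by (simp add: R_def)
    have first_layer: "\<forall>y\<in>S. \<forall>x\<in>S \<union> \<Union>(set R). (x, y) \<notin> E"
      using R_Union unfolding S_def sources_in_def by auto
    have second_layer: "\<forall>y\<in>hd R. \<exists>x\<in>S. (x, y) \<in> E" if "R \<noteq> []"
    proof
      fix y assume "y \<in> hd R"
      obtain B R' where BR: "R = B # R'" using \<open>R \<noteq> []\<close> by (cases R) auto
      have "y \<in> U - S" using \<open>y \<in> hd R\<close> R_Union BR by auto
      then obtain x where x: "x \<in> U" "(x, y) \<in> E" unfolding S_def sources_in_def by auto
      have "\<forall>y\<in>B. \<forall>x\<in>\<Union>(set R). (x, y) \<notin> E"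
        using R unfolding BR root_layered_Cons by simp
      then have "x \<notin> \<Union>(set R)" using \<open>y \<in> hd R\<close> x(2) BR by auto
      then show "\<exists>x\<in>S. (x, y) \<in> E" using x R_Union by blast
    qed
    show ?thesis
      unfolding unfold root_layered_Cons using first_layer second_layer R by simp
  qed (simp add: root_layered_def)
qed

lemma layering_fuel_covers:
  assumes "finite E" "acyclic E" "finite U" "card U \<le> m"
  shows "\<Union>(set (layering_fuel E U m)) = U"
  using assms(3,4)
proof (induction m arbitrary: U)
  case (Suc m)
  show ?case
  proof (cases "U = {}")
    case False
    obtain z where "z \<in> U" "\<And>y. (y, z) \<in> E \<Longrightarrow> y \<notin> U"
      using wfE_min'[OF finite_acyclic_wf[OF assms(1,2)] False] by blast
    then have "z \<in> sources_in E U" by (auto simp: sources_in_def)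
    then have "card (U - sources_in E U) < card U"
      using \<open>z \<in> U\<close> Suc.prems(1) by (intro psubset_card_mono) auto
    then have "\<Union>(set (layering_fuel E (U - sources_in E U) m)) = U - sources_in E U"
      using Suc.IH[of "U - sources_in E U"] Suc.prems by simp
    then show ?thesis
      using False sources_in_subset[of E U] by auto
  qed simp
qed simp

lemma layering_fuel_root_layered:
  assumes "root_layered E L" "{} \<notin> set L" "sorted_wrt disjnt L" "length L \<le> m"
  shows "layering_fuel E (\<Union>(set L)) m = L"
  using assms
proof (induction L arbitrary: m)
  case Nil
  then show ?case by (cases m) auto
next
  case (Cons A Ls)
  then obtain m' where m: "m = Suc m'" by (cases m) auto
  define U where "U = A \<union> \<Union>(set Ls)"
  have "sources_in E U = A"
  proof
    show "A \<subseteq> sources_in E U"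
      using Cons.prems(1) unfolding U_def root_layered_Cons sources_in_def by auto
    show "sources_in E U \<subseteq> A"
    proof
      fix v assume v: "v \<in> sources_in E U"
      show "v \<in> A"
      proof (rule ccontr)
        assume "v \<notin> A"
        then obtain t where t: "t < length Ls" "v \<in> (A # Ls) ! Suc t"
          using v unfolding sources_in_def U_def by (auto simp: in_set_conv_nth)
        then obtain x where "x \<in> (A # Ls) ! t" "(x, v) \<in> E"
          using Cons.prems(1) unfolding root_layered_def by (metis Suc_mono length_Cons)
        moreover have "(A # Ls) ! t \<subseteq> U"
          using t(1) unfolding U_def by (auto simp: nth_Cons' dest: nth_mem)
        ultimately show False using v unfolding sources_in_def by blast
      qed
    qed
  qed
  moreover have "U - A = \<Union>(set Ls)"
    using Cons.prems(3) unfolding U_def by (auto simp: disjnt_def)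
  moreover have "layering_fuel E (\<Union>(set Ls)) m' = Ls"
    using Cons.IH Cons.prems m by (simp add: root_layered_Cons)
  ultimately show ?case
    using Cons.prems(2) m unfolding U_def by auto
qed

lemma root_layered_acyclic:
  assumes "root_layered E L" "E \<subseteq> \<Union>(set L) \<times> \<Union>(set L)"
  shows "acyclic E"
proof -
  have "\<forall>x\<in>\<Union>(set L). \<exists>i. i < length L \<and> x \<in> L ! i"
    by (auto simp: in_set_conv_nth)
  then obtain layer where layer: "\<And>x. x \<in> \<Union>(set L) \<Longrightarrow> layer x < length L \<and> x \<in> L ! layer x"
    by metis
  have "E \<subseteq> inv_image less_than layer"
  proof
    fix e assume "e \<in> E"
    then obtain x y where e: "e = (x, y)" "(x, y) \<in> E" by (cases e) auto
    then have "x \<in> \<Union>(set L)" "y \<in> \<Union>(set L)" using assms(2) by auto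
    then have "\<not> layer y \<le> layer x"
      using assms(1) layer[of x] layer[of y] e(2) unfolding root_layered_def by blast
    then show "e \<in> inv_image less_than layer" using e by simp
  qed
  then show ?thesis
    using wf_acyclic[OF wf_inv_image[OF wf_less_than]] acyclic_subset by blast
qed

(* (i, j, y) indexes the block L ! i \<times> {y} of potential edges from layer i into the vertex y of layer j. *)
definition in_blocks :: "nat set list \<Rightarrow> (nat \<times> nat \<times> nat) set" where
  "in_blocks L = (SIGMA i:{..<length L}. SIGMA j:{..<length L}. L ! j)"

definition in_block :: "nat set list \<Rightarrow> nat \<times> nat \<times> nat \<Rightarrow> (nat \<times> nat) set" where
  "in_block L = (\<lambda>(i, j, y). L ! i \<times> {y})"

definition block_admissible :: "nat \<times> nat \<times> nat \<Rightarrow> (nat \<times> nat) set \<Rightarrow> bool" where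
  "block_admissible = (\<lambda>(i, j, y) T. (j \<le> i \<longrightarrow> T = {}) \<and> (j = Suc i \<longrightarrow> T \<noteq> {}))"

definition block_law :: "real \<Rightarrow> nat set list \<Rightarrow> nat \<times> nat \<times> nat \<Rightarrow> (nat \<times> nat) set \<Rightarrow> real" where
  "block_law p L = (\<lambda>(i, j, y) T. (\<Prod>x\<in>L ! i. pair_factor p T i j x y) *
     (if j = Suc i then inneighbour_factor p T (L ! i) y else 1))"

definition block_weight :: "real \<Rightarrow> nat set list \<Rightarrow> nat \<times> nat \<times> nat \<Rightarrow> real" where
  "block_weight w L = (\<lambda>(i, j, y).
     if j \<le> i then 1 else if j = Suc i then (1 + w) ^ card (L ! i) - 1 else (1 + w) ^ card (L ! i))"

definition layered_edge_sets :: "nat \<Rightarrow> nat set list \<Rightarrow> (nat \<times> nat) set set" where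
  "layered_edge_sets n L = {E. E \<subseteq> {1..n} \<times> {1..n} \<and> root_layered E L}"

lemma block_law_Int_in_block: "block_law p L g (E \<inter> in_block L g) = block_law p L g E"
proof -
  obtain i j y where g: "g = (i, j, y)" by (cases g)
  have pairs: "(\<Prod>x\<in>L ! i. pair_factor p (E \<inter> in_block L (i, j, y)) i j x y)
      = (\<Prod>x\<in>L ! i. pair_factor p E i j x y)"
    by (rule prod.cong) (auto simp: pair_factor_def in_block_def)
  have "{x \<in> L ! i. (x, y) \<in> E \<inter> in_block L (i, j, y)} = {x \<in> L ! i. (x, y) \<in> E}"
    by (auto simp: in_block_def)
  then have inneighbours: "inneighbour_factor p (E \<inter> in_block L (i, j, y)) (L ! i) y
      = inneighbour_factor p E (L ! i) y"
    unfolding inneighbour_factor_def by simp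
  show ?thesis
    by (simp only: g block_law_def prod.case pairs inneighbours)
qed

context
  fixes n :: nat and L :: "nat set list"
  assumes partition: "ordered_partition n L"
begin

lemma layers_Union: "\<Union>(set L) = {1..n}"
  using partition by (simp add: ordered_partition_def)

lemma layer_nonempty: "i < length L \<Longrightarrow> L ! i \<noteq> {}"
  using partition by (simp add: ordered_partition_def)

lemma layers_disjoint: "i < length L \<Longrightarrow> j < length L \<Longrightarrow> i \<noteq> j \<Longrightarrow> L ! i \<inter> L ! j = {}"
  using partition by (simp add: ordered_partition_def)

lemma layer_subset: "i < length L \<Longrightarrow> L ! i \<subseteq> {1..n}"
  using layers_Union nth_mem by blast

lemma finite_layer: "i < length L \<Longrightarrow> finite (L ! i)"
  using layer_subset finite_subset by blast

lemma length_layers_le: "length L \<le> n"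
proof -
  have "length L = (\<Sum>i<length L. 1)" by simp
  also have "\<dots> \<le> (\<Sum>i<length L. card (L ! i))"
    using finite_layer layer_nonempty by (intro sum_mono) (simp add: Suc_leI card_gt_0_iff)
  also have "\<dots> = card (\<Union>i<length L. L ! i)"
    using finite_layer layers_disjoint by (intro card_UN_disjoint[symmetric]) auto
  also have "(\<Union>i<length L. L ! i) = \<Union>(set L)"
    by (auto simp: in_set_conv_nth) (metis nth_mem)
  also have "\<dots> = {1..n}"
    by (rule layers_Union)
  finally show ?thesis by simp
qed

lemma root_layering_eq_iff:
  assumes "E \<subseteq> {1..n} \<times> {1..n}"
  shows "root_layering (n, E) = L \<longleftrightarrow> root_layered E L"
proof
  assume "root_layering (n, E) = L"
  then show "root_layered E L"
    using root_layered_layering_fuel[of E "{1..n}" n] layers_Union by (simp add: root_layering_def)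
next
  assume "root_layered E L"
  moreover have "{} \<notin> set L"
    using layer_nonempty by (auto simp: in_set_conv_nth)
  moreover have "sorted_wrt disjnt L"
    using layers_disjoint by (auto simp: sorted_wrt_iff_nth_less disjnt_def)
  ultimately show "root_layering (n, E) = L"
    using layering_fuel_root_layered[of E L n] length_layers_le layers_Union
    by (simp add: root_layering_def)
qed

lemma finite_in_blocks: "finite (in_blocks L)"
  using finite_layer by (auto simp: in_blocks_def)

lemma finite_in_block: "g \<in> in_blocks L \<Longrightarrow> finite (in_block L g)"
  using finite_layer by (auto simp: in_blocks_def in_block_def)

lemma layer_unique: "i < length L \<Longrightarrow> j < length L \<Longrightarrow> y \<in> L ! i \<Longrightarrow> y \<in> L ! j \<Longrightarrow> i = j"
  using layers_disjoint by blast

lemma vertex_in_layer: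
  assumes "x \<in> {1..n}"
  obtains i where "i < length L" "x \<in> L ! i"
  using assms layers_Union by (metis UnionE in_set_conv_nth)

lemma disjoint_in_block: "disjoint_family_on (in_block L) (in_blocks L)"
  unfolding disjoint_family_on_def
proof (intro ballI impI)
  fix g g' assume g: "g \<in> in_blocks L" "g' \<in> in_blocks L" "g \<noteq> g'"
  obtain i j y i' j' y' where gg: "g = (i, j, y)" "g' = (i', j', y')"
    by (cases g, cases g') auto
  show "in_block L g \<inter> in_block L g' = {}"
  proof (cases "y = y'")
    case True
    then have "j = j'"
      using g gg layer_unique by (auto simp: in_blocks_def)
    then have "L ! i \<inter> L ! i' = {}"
      using g gg True layers_disjoint by (auto simp: in_blocks_def)
    then show ?thesis by (auto simp: gg in_block_def)
  qed (auto simp: gg in_block_def)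
qed

lemma Union_in_block: "(\<Union>g\<in>in_blocks L. in_block L g) = {1..n} \<times> {1..n}"
proof
  show "(\<Union>g\<in>in_blocks L. in_block L g) \<subseteq> {1..n} \<times> {1..n}"
    using layer_subset by (auto simp: in_blocks_def in_block_def)
  show "{1..n} \<times> {1..n} \<subseteq> (\<Union>g\<in>in_blocks L. in_block L g)"
  proof
    fix e assume "e \<in> {1..n} \<times> {1..n}"
    then obtain x y where e: "e = (x, y)" "x \<in> {1..n}" "y \<in> {1..n}" by blast
    obtain i j where "i < length L" "x \<in> L ! i" "j < length L" "y \<in> L ! j"
      using vertex_in_layer e by metis
    then have "(i, j, y) \<in> in_blocks L" "e \<in> in_block L (i, j, y)"
      using e by (auto simp: in_blocks_def in_block_def)
    then show "e \<in> (\<Union>g\<in>in_blocks L. in_block L g)" by blast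
  qed
qed

lemma prod_in_blocks:
  "(\<Prod>g\<in>in_blocks L. F g) = (\<Prod>i<length L. \<Prod>j<length L. \<Prod>y\<in>L ! j. F (i, j, y))"
proof -
  have "(\<Prod>i<length L. \<Prod>j<length L. \<Prod>y\<in>L ! j. F (i, j, y))
      = (\<Prod>i<length L. \<Prod>(j, y)\<in>(SIGMA j:{..<length L}. L ! j). F (i, j, y))"
    using finite_layer by (intro prod.cong refl, subst prod.Sigma) auto
  also have "\<dots> = (\<Prod>(i, jy)\<in>(SIGMA i:{..<length L}. SIGMA j:{..<length L}. L ! j). F (i, jy))"
    using finite_layer by (subst prod.Sigma) (auto simp: case_prod_unfold)
  finally show ?thesis
    by (simp add: in_blocks_def case_prod_unfold)
qed

lemma layered_edge_law_eq_prod_block_law: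
  "layered_edge_law p L E = (\<Prod>g\<in>in_blocks L. block_law p L g (E \<inter> in_block L g))"
proof -
  let ?k = "length L"
  let ?pairs = "\<lambda>i j y. \<Prod>x\<in>L ! i. pair_factor p E i j x y"
  let ?inn = "\<lambda>i y. inneighbour_factor p E (L ! i) y"
  have if_one: "(\<Prod>x\<in>A. if c then f x else 1) = (if c then prod f A else 1)" for c A and f :: "nat \<Rightarrow> real"
    by simp
  have "(\<Prod>g\<in>in_blocks L. block_law p L g (E \<inter> in_block L g))
      = (\<Prod>i<?k. \<Prod>j<?k. \<Prod>y\<in>L ! j. ?pairs i j y * (if j = Suc i then ?inn i y else 1))"
    by (simp only: block_law_Int_in_block prod_in_blocks) (simp add: block_law_def)
  also have "\<dots> = (\<Prod>i<?k. \<Prod>j<?k. \<Prod>y\<in>L ! j. ?pairs i j y) *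
      (\<Prod>i<?k. \<Prod>j<?k. if j = Suc i then \<Prod>y\<in>L ! j. ?inn i y else 1)"
    by (simp only: prod.distrib if_one)
  also have "(\<Prod>i<?k. \<Prod>j<?k. \<Prod>y\<in>L ! j. ?pairs i j y)
      = (\<Prod>i<?k. \<Prod>j<?k. \<Prod>x\<in>L ! i. \<Prod>y\<in>L ! j. pair_factor p E i j x y)"
    by (intro prod.cong refl prod.swap)
  also have "(\<Prod>i<?k. \<Prod>j<?k. if j = Suc i then \<Prod>y\<in>L ! j. ?inn i y else 1)
      = (\<Prod>i<?k. if Suc i < ?k then \<Prod>y\<in>L ! Suc i. ?inn i y else 1)"
    by (intro prod.cong refl) (simp add: prod.delta)
  also have "\<dots> = (\<Prod>i<?k - 1. \<Prod>y\<in>L ! (i + 1). ?inn i y)"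
  proof -
    have "{..<?k} \<inter> {i. Suc i < ?k} = {..<?k - 1}" by auto
    then show ?thesis by (simp add: prod.If_cases)
  qed
  finally show ?thesis
    by (simp add: layered_edge_law_def)
qed

lemma block_admissible_iff_root_layered:
  "(\<forall>g\<in>in_blocks L. block_admissible g (E \<inter> in_block L g)) \<longleftrightarrow> root_layered E L"
proof -
  have "block_admissible (i, j, y) (E \<inter> in_block L (i, j, y)) \<longleftrightarrow>
      (j \<le> i \<longrightarrow> (\<forall>x\<in>L ! i. (x, y) \<notin> E)) \<and> (j = Suc i \<longrightarrow> (\<exists>x\<in>L ! i. (x, y) \<in> E))" for i j y
    by (auto simp: block_admissible_def in_block_def)
  then show ?thesis
    unfolding root_layered_def in_blocks_def by fastforce
qed

lemma block_law_in_neighbours: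
  fixes T :: "(nat \<times> nat) set" and y :: nat
  assumes "i < length L"
  defines "S \<equiv> {x \<in> L ! i. (x, y) \<in> T}" and "m \<equiv> card (L ! i)"
  shows "block_law p L (i, j, y) T =
    (if j \<le> i then 0 ^ card S
     else if j = Suc i then (if S = {} then 0 else p ^ card S * (1 - p) ^ (m - card S) / (1 - (1 - p) ^ m))
     else p ^ card S * (1 - p) ^ (m - card S))"
proof -
  have fin: "finite (L ! i)" and S: "S \<subseteq> L ! i"
    using finite_layer[OF assms(1)] by (auto simp: S_def)
  have "(\<Prod>x\<in>L ! i. pair_factor p T i j x y) = (\<Prod>x\<in>L ! i.
      if j \<le> i then (if x \<in> S then 0 else 1)
      else if Suc (Suc i) \<le> j then (if x \<in> S then p else 1 - p) else 1)"
    by (intro prod.cong) (auto simp: pair_factor_def S_def)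
  also have "\<dots> = (if j \<le> i then 0 ^ card S
      else if Suc (Suc i) \<le> j then p ^ card S * (1 - p) ^ (m - card S) else 1)"
    using prod_if_mem_eq_power[OF fin S, of "0 :: real" 1] prod_if_mem_eq_power[OF fin S, of p "1 - p"]
    by (simp add: m_def)
  finally have pairs: "(\<Prod>x\<in>L ! i. pair_factor p T i j x y) = \<dots>" .
  have "inneighbour_factor p T (L ! i) y
      = (if S = {} then 0 else p ^ card S * (1 - p) ^ (m - card S) / (1 - (1 - p) ^ m))"
    unfolding inneighbour_factor_def Let_def S_def m_def ..
  with pairs show ?thesis
    by (auto simp: block_law_def)
qed

lemma block_law_eq:
  assumes "w > 0" "g \<in> in_blocks L" "T \<subseteq> in_block L g"
  shows "block_law (w / (1 + w)) L g T
       = (if block_admissible g T then w ^ card T else 0) / block_weight w L g"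
proof -
  obtain i j y where g: "g = (i, j, y)" by (cases g)
  have i: "i < length L" using assms(2) by (auto simp: g in_blocks_def)
  define S where "S = {x \<in> L ! i. (x, y) \<in> T}"
  define m where "m = card (L ! i)"
  have "T = S \<times> {y}"
    using assms(3) by (auto simp: g in_block_def S_def)
  then have T: "card T = card S" "T = {} \<longleftrightarrow> S = {}"
    by (auto simp: card_cartesian_product)
  have S: "finite S" "card S \<le> m"
    using finite_layer[OF i] by (auto simp: S_def m_def intro: card_mono)
  then have bernoulli: "(w / (1 + w)) ^ card S * (1 - w / (1 + w)) ^ (m - card S) = w ^ card S / (1 + w) ^ m"
    using bernoulli_power_eq[of w "card S" m] assms(1) by simp
  have "(1 - w / (1 + w)) ^ m = 1 / (1 + w) ^ m"
    using bernoulli_power_eq[of w 0 m] assms(1) by simp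
  moreover have "(1 + w) ^ m > 1"
    using assms(1) layer_nonempty[OF i] finite_layer[OF i] by (simp add: m_def card_gt_0_iff)
  then have "w ^ card S / (1 + w) ^ m / (1 - 1 / (1 + w) ^ m) = w ^ card S / ((1 + w) ^ m - 1)"
    using assms(1) by (simp add: field_simps)
  ultimately show ?thesis
    unfolding g block_law_in_neighbours[OF i] S_def[symmetric] m_def[symmetric] bernoulli
    using S T by (auto simp: block_admissible_def block_weight_def m_def card_gt_0_iff)
qed

lemma sum_block_admissible_power_card:
  assumes "g \<in> in_blocks L"
  shows "(\<Sum>T\<in>Pow (in_block L g). if block_admissible g T then w ^ card T else 0) = block_weight w L g"
proof -
  obtain i j y where g: "g = (i, j, y)" by (cases g)
  have i: "i < length L" using assms by (auto simp: g in_blocks_def)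
  define B where "B = in_block L g"
  have fin: "finite B" using finite_in_block[OF assms] by (simp add: B_def)
  have "card B = card (L ! i)" by (simp add: B_def g in_block_def card_cartesian_product)
  then have all: "(\<Sum>T\<in>Pow B. w ^ card T) = (1 + w) ^ card (L ! i)"
    using sum_Pow_power_card[OF fin] by simp
  have nonempty: "(\<Sum>T\<in>Pow B. if T \<noteq> {} then w ^ card T else 0) = (1 + w) ^ card (L ! i) - 1"
    using all fin by (simp add: sum.remove[of "Pow B" "{}"])
  consider (backward) "j \<le> i" | (adjacent) "j = Suc i" | (distant) "Suc (Suc i) \<le> j"
    by linarith
  then show ?thesis
  proof cases
    case backward
    then show ?thesis using fin unfolding B_def[symmetric]
      by (simp add: g block_admissible_def block_weight_def sum.delta)
  next
    case adjacent
    then show ?thesis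
      using nonempty unfolding B_def[symmetric]
      by (simp add: g block_admissible_def block_weight_def)
  next
    case distant
    then show ?thesis
      using all unfolding B_def[symmetric]
      by (simp add: g block_admissible_def block_weight_def)
  qed
qed

lemma prod_block_admissible_power_card:
  fixes w :: "'a :: comm_semiring_1"
  assumes "E \<subseteq> {1..n} \<times> {1..n}"
  shows "(\<Prod>g\<in>in_blocks L. if block_admissible g (E \<inter> in_block L g) then w ^ card (E \<inter> in_block L g) else 0)
       = (if root_layered E L then w ^ card E else 0)"
proof -
  have E: "E \<subseteq> (\<Union>g\<in>in_blocks L. in_block L g)"
    using assms Union_in_block by simp
  have "(\<Prod>g\<in>in_blocks L. if block_admissible g (E \<inter> in_block L g) then w ^ card (E \<inter> in_block L g) else 0)
      = (if \<forall>g\<in>in_blocks L. block_admissible g (E \<inter> in_block L g) then w ^ card E else 0)"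
    using finite_in_blocks finite_in_block disjoint_in_block E by (rule prod_if_power_card_Int)
  then show ?thesis
    by (simp only: block_admissible_iff_root_layered)
qed

lemma sum_layered_edge_sets:
  "(\<Sum>E\<in>layered_edge_sets n L. w ^ card E) = (\<Prod>g\<in>in_blocks L. block_weight w L g)"
proof -
  let ?P = "{1..n} \<times> {1..n}"
  have sets: "layered_edge_sets n L = {E \<in> Pow ?P. root_layered E L}"
    by (auto simp: layered_edge_sets_def)
  have "(\<Sum>E\<in>layered_edge_sets n L. w ^ card E)
      = (\<Sum>E\<in>Pow ?P. if root_layered E L then w ^ card E else 0)"
    unfolding sets by (intro sum.inter_filter) simp
  also have "\<dots> = (\<Sum>E\<in>Pow ?P. \<Prod>g\<in>in_blocks L.
      if block_admissible g (E \<inter> in_block L g) then w ^ card (E \<inter> in_block L g) else 0)"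
    by (intro sum.cong refl prod_block_admissible_power_card[symmetric]) simp
  also have "\<dots> = (\<Prod>g\<in>in_blocks L. \<Sum>T\<in>Pow (in_block L g).
      if block_admissible g T then w ^ card T else 0)"
    using sum_Pow_UN_disjoint[OF finite_in_blocks finite_in_block disjoint_in_block] Union_in_block
    by simp
  also have "\<dots> = (\<Prod>g\<in>in_blocks L. block_weight w L g)"
    by (intro prod.cong refl sum_block_admissible_power_card)
  finally show ?thesis .
qed

lemma layered_edge_law_eq:
  assumes "w > 0" "E \<subseteq> {1..n} \<times> {1..n}"
  shows "layered_edge_law (w / (1 + w)) L E
       = (if root_layered E L then w ^ card E else 0) / (\<Sum>E'\<in>layered_edge_sets n L. w ^ card E')"
proof -
  have "layered_edge_law (w / (1 + w)) L E = (\<Prod>g\<in>in_blocks L.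
      (if block_admissible g (E \<inter> in_block L g) then w ^ card (E \<inter> in_block L g) else 0)
        / block_weight w L g)"
    unfolding layered_edge_law_eq_prod_block_law using block_law_eq[OF assms(1)]
    by (intro prod.cong) auto
  then show ?thesis
    by (simp add: prod_dividef prod_block_admissible_power_card[OF assms(2)] sum_layered_edge_sets)
qed

lemma root_layering_vertices:
  assumes "G \<in> labelled_dags" "root_layering G = L"
  shows "fst G = n"
proof -
  obtain n' E where G: "G = (n', E)" "E \<subseteq> {1..n'} \<times> {1..n'}" "acyclic E"
    using assms(1) by (auto simp: labelled_dags_def)
  then have "finite E" by (meson finite_SigmaI finite_atLeastAtMost finite_subset)
  then have "\<Union>(set L) = {1..n'}"
    using layering_fuel_covers[of E "{1..n'}" n'] G assms(2) by (simp add: root_layering_def)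
  then have "{1..n'} = {1..n}" by (metis layers_Union)
  then have "n' = n" by (metis card_atLeastAtMost diff_Suc_1)
  then show ?thesis using G(1) by simp
qed

lemma dags_with_root_layering:
  "{G \<in> labelled_dags. root_layering G = L} = (\<lambda>E. (n, E)) ` layered_edge_sets n L"
proof (intro set_eqI iffI)
  fix G assume "G \<in> {G \<in> labelled_dags. root_layering G = L}"
  then have dag: "G \<in> labelled_dags" and layering: "root_layering G = L" by auto
  obtain E where G: "G = (n, E)"
    using root_layering_vertices[OF dag layering] by (cases G) auto
  then have "E \<subseteq> {1..n} \<times> {1..n}"
    using dag by (simp add: labelled_dags_def)
  moreover have "root_layered E L"
    using root_layering_eq_iff[OF calculation] layering G by simp
  ultimately show "G \<in> (\<lambda>E. (n, E)) ` layered_edge_sets n L"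
    using G by (simp add: layered_edge_sets_def)
next
  fix G assume "G \<in> (\<lambda>E. (n, E)) ` layered_edge_sets n L"
  then obtain E where G: "G = (n, E)" "E \<subseteq> {1..n} \<times> {1..n}" "root_layered E L"
    by (auto simp: layered_edge_sets_def)
  then have "acyclic E"
    using root_layered_acyclic layers_Union by simp
  then show "G \<in> {G \<in> labelled_dags. root_layering G = L}"
    using G root_layering_eq_iff by (simp add: labelled_dags_def)
qed

lemma boltzmann_prob_layered:
  assumes "E \<in> layered_edge_sets n L"
  shows "boltzmann_prob z w (n, E) = boltzmann_prob z w (n, {}) * w ^ card E"
proof -
  have "(n, E) \<in> labelled_dags"
    using assms dags_with_root_layering by blast
  moreover have "(n, {}) \<in> labelled_dags"
    by (simp add: labelled_dags_def acyclic_def)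
  ultimately show ?thesis
    by (simp add: boltzmann_prob_def dag_weight_def)
qed

lemma boltzmann_event_root_layering:
  "boltzmann_event z w (\<lambda>G. root_layering G = L)
     = boltzmann_prob z w (n, {}) * (\<Sum>E\<in>layered_edge_sets n L. w ^ card E)"
proof -
  have "finite (layered_edge_sets n L)"
    by (rule finite_subset[of _ "Pow ({1..n} \<times> {1..n})"]) (auto simp: layered_edge_sets_def)
  then show ?thesis
    unfolding boltzmann_event_def dags_with_root_layering
    by (simp add: sum.reindex inj_on_def boltzmann_prob_layered sum_distrib_left)
qed

end

lemma DAG_gf_pos:
  assumes "z \<ge> 0" "w \<ge> 0" "DAG_finite z w"
  shows "DAG_gf z w > 0"
proof -
  have "(0, {}) \<in> labelled_dags"
    by (simp add: labelled_dags_def acyclic_def)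
  moreover have "dag_weight z w G \<ge> 0" for G
    using assms(1,2) by (simp add: dag_weight_def)
  ultimately have "infsum (dag_weight z w) {(0, {})} \<le> DAG_gf z w"
    using assms(3) unfolding DAG_gf_def DAG_finite_def by (intro infsum_mono2) auto
  then show ?thesis
    by (simp add: dag_weight_def binomial_eq_0)
qed

theorem lemma4:
  fixes z w :: real and n :: nat and L :: "nat set list" and E :: "(nat \<times> nat) set"
  assumes "z > 0" and "w > 0"
    and "DAG_finite z w"
    and "ordered_partition n L"
    and "E \<subseteq> {1..n} \<times> {1..n}"
  shows "(if root_layering (n, E) = L then boltzmann_prob z w (n, E) else 0)
           / boltzmann_event z w (\<lambda>G. root_layering G = L)
         = layered_edge_law (w / (1 + w)) L E"
proof -
  have "boltzmann_prob z w (n, {}) > 0"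
    using assms(1,2) DAG_gf_pos[OF _ _ assms(3)]
    by (simp add: boltzmann_prob_def labelled_dags_def acyclic_def dag_weight_def)
  moreover have "root_layering (n, E) = L \<longleftrightarrow> root_layered E L"
    by (rule root_layering_eq_iff[OF assms(4,5)])
  moreover have "layered_edge_law (w / (1 + w)) L E
      = (if root_layered E L then w ^ card E else 0) / (\<Sum>E'\<in>layered_edge_sets n L. w ^ card E')"
    by (rule layered_edge_law_eq[OF assms(4,2,5)])
  moreover have "E \<in> layered_edge_sets n L \<longleftrightarrow> root_layered E L"
    using assms(5) by (simp add: layered_edge_sets_def)
  ultimately show ?thesis
    using boltzmann_prob_layered[OF assms(4)] boltzmann_event_root_layering[OF assms(4)] by auto
qed

end
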